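(* Let $d\ge1$, $M=2^d$, $p\in(0,1]$, $r=1/p-1/2$, and consider estimating an unknown density $f\in\mathcal F^{+,1}_d(p)$ from $n$ i.i.d. samples $X_1,\dots,X_n$ drawn from $f$; the infimum below is over all estimators $\widehat f_n$ (functions of $X_1,\dots,X_n$ with values in real functions on $\{0,1\}^d$). (1) For every $\epsilon\in(0,1)$ there is a constant $C=C(p,\epsilon)>0$ such that whenever $\log M\le n\le M^{2(1-\epsilon)/p}$, $$\inf_{\widehat f_n}\sup_{f\in\mathcal F^{+,1}_d(p)}\mathbb E_f\|\widehat f_n-f\|^2_{L^2(\mu_d)}\ge\frac{C}{M}\left(\frac{\log M}{n}\right)^{2r/(2r+1)}.$$ (2) There is an absolute constant $C>0$ such that whenever $n\ge M^{2/p}$ and $M\ge4$, $$\inf_{\widehat f_n}\sup_{f\in\mathcal F^{+,1}_d(p)}\mathbb E_f\|\widehat f_n-f\|^2_{L^2(\mu_d)}\ge\frac{C}{n}.$$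
   Context: $\mu_d$ is counting measure on $\{0,1\}^d$, $\|g\|^2_{L^2(\mu_d)}=\sum_x g(x)^2$, $\log$ is the natural logarithm. Walsh functions: $\varphi_s(x)=2^{-d/2}(-1)^{\sum_j s^{(j)}x^{(j)}}$ for $s,x\in\{0,1\}^d$, and $\theta_s(g)=\sum_x g(x)\varphi_s(x)$. $\mathcal F_d(p)$ is the set of $g:\{0,1\}^d\to\mathbb R$ such that, with $|\theta_{(1)}|\ge\dots\ge|\theta_{(M)}|$ the coefficients of $g$ sorted by decreasing magnitude, $|\theta_{(m)}|\le M^{-1/2}m^{-1/p}$ for $1\le m\le M$; $\mathcal F^{+,1}_d(p)$ is the set of $g\in\mathcal F_d(p)$ with $g\ge0$ and $\sum_x g(x)=1$. *)

theory Defs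
  imports "HOL-Analysis.Analysis" "HOL-Library.Multiset"
begin

text \<open>The cube {0,1}^d is encoded as the subsets of {..<d}: a point x is the set of
coordinates equal to 1.  Then sum_j s_j x_j = card (s \<inter> x).\<close>

definition cube :: "nat \<Rightarrow> nat set set" where
  "cube d = Pow {..<d}"

definition walsh :: "nat \<Rightarrow> nat set \<Rightarrow> nat set \<Rightarrow> real" where
  "walsh d s x = 2 powr (- real d / 2) * (-1) ^ card (s \<inter> x)"

definition theta :: "nat \<Rightarrow> (nat set \<Rightarrow> real) \<Rightarrow> nat set \<Rightarrow> real" where
  "theta d g s = (\<Sum>x\<in>cube d. g x * walsh d s x)"

text \<open>Absolute values of the Walsh coefficients sorted in decreasing order
  (entry m-1 is |theta_(m)|).\<close>
definition sorted_coeffs :: "nat \<Rightarrow> (nat set \<Rightarrow> real) \<Rightarrow> real list" where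
  "sorted_coeffs d g = rev (sorted_list_of_multiset
      (image_mset (\<lambda>s. \<bar>theta d g s\<bar>) (mset_set (cube d))))"

definition Fd :: "nat \<Rightarrow> real \<Rightarrow> (nat set \<Rightarrow> real) set" where
  "Fd d p = {g. \<forall>m\<in>{1..2^d}.
      sorted_coeffs d g ! (m - 1) \<le> (2 ^ d) powr (-1/2) * (real m) powr (-1/p)}"

definition Fplus1 :: "nat \<Rightarrow> real \<Rightarrow> (nat set \<Rightarrow> real) set" where
  "Fplus1 d p = {g \<in> Fd d p. (\<forall>x\<in>cube d. g x \<ge> 0) \<and> (\<Sum>x\<in>cube d. g x) = 1}"

text \<open>Risk E_f || est(X_1..X_n) - f ||^2 for n i.i.d. samples with probability mass f.
  An estimator is any map from sample tuples (X_0,...,X_{n-1}) to real functions on the cube.\<close>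
definition risk :: "nat \<Rightarrow> nat \<Rightarrow> ((nat \<Rightarrow> nat set) \<Rightarrow> nat set \<Rightarrow> real)
      \<Rightarrow> (nat set \<Rightarrow> real) \<Rightarrow> real" where
  "risk d n est f = (\<Sum>X\<in>PiE {..<n} (\<lambda>_. cube d).
      (\<Prod>i<n. f (X i)) * (\<Sum>x\<in>cube d. (est X x - f x)\<^sup>2))"

definition minimax_risk :: "nat \<Rightarrow> real \<Rightarrow> nat \<Rightarrow> ereal" where
  "minimax_risk d p n = (INF est. SUP f\<in>Fplus1 d p. ereal (risk d n est f))"

end

theory Submission
  imports Defs
begin

text \<open>An Assouad-type argument, with \<open>M = 2\<^sup>d\<close>. Split \<open>k \<cdot> B\<close> nonconstant Walsh functions into \<open>k\<close>
  blocks of \<open>B\<close>; for \<open>w \<in> {0..B}\<^sup>k\<close> let \<open>f\<^sub>w\<close> be the uniform density plus \<open>a\<close> times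
  the \<open>w\<^sub>b\<close>-th Walsh function of every block \<open>b\<close> (none if \<open>w\<^sub>b = B\<close>). When \<open>k a\<close> is
  small against \<open>2\<^sup>-\<^sup>d\<^sup>/\<^sup>2\<close> these are densities, and the coefficient bound puts them in
  the class. By Bessel's inequality an estimator loses \<open>a\<^sup>2/4\<close> for every block in which
  it cannot decode \<open>w\<^sub>b\<close>. Changing a single \<open>w\<^sub>b\<close> changes the law of the sample by a
  chi-square factor at most \<open>(1 + 2 M a\<^sup>2)\<^sup>n \<le> exp (2 n M a\<^sup>2)\<close>; if this is at most
  \<open>1 + (B + 1)/16\<close>, no test decodes a block with average success above \<open>3/4\<close>, and the
  maximal risk is at least \<open>k a\<^sup>2/16\<close>. The first bound takes
  \<open>k \<approx> (n / log M)\<^sup>p\<^sup>/\<^sup>2\<close>, \<open>B \<approx> M\<^sup>\<epsilon>\<close> and \<open>a\<^sup>2 \<approx> log M / (n M)\<close>; the second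
  \<open>k = M - 1\<close>, \<open>B = 1\<close> and \<open>a\<^sup>2 \<approx> 1 / (n M)\<close>.\<close>

section \<open>Walsh analysis on the cube\<close>

lemma finite_cube [simp]: "finite (cube d)"
  unfolding cube_def by simp

lemma card_cube: "card (cube d) = 2 ^ d"
  unfolding cube_def by (simp add: card_Pow)

lemma sum_Pow_neg_one_power_card_Int:
  assumes "finite D"
  shows "(\<Sum>x\<in>Pow D. (-1::real) ^ card (u \<inter> x)) = (if u \<inter> D = {} then 2 ^ card D else 0)"
  using assms
proof (induction D rule: finite_induct)
  case empty
  then show ?case by simp
next
  case (insert a D)
  have "inj_on (insert a) (Pow D)"
    using insert(2) unfolding inj_on_def by (metis PowD insert_ident subsetD)
  moreover have "Pow D \<inter> insert a ` Pow D = {}"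
    using insert(2) by auto
  ultimately have split: "(\<Sum>x\<in>Pow (insert a D). (-1::real) ^ card (u \<inter> x)) =
     (\<Sum>x\<in>Pow D. (-1::real) ^ card (u \<inter> x) + (-1) ^ card (u \<inter> insert a x))"
    unfolding Pow_insert using insert(1) by (simp add: sum.union_disjoint sum.reindex sum.distrib)
  show ?case
  proof (cases "a \<in> u")
    case True
    have "(-1::real) ^ card (u \<inter> x) + (-1) ^ card (u \<inter> insert a x) = 0" if "x \<in> Pow D" for x
    proof -
      have "u \<inter> insert a x = insert a (u \<inter> x)" "a \<notin> u \<inter> x" "finite (u \<inter> x)"
        using True that insert(1,2) finite_subset by auto
      then show ?thesis by simp
    qed
    then show ?thesis using split True by simp
  next
    case False
    then have "u \<inter> insert a x = u \<inter> x" for x by auto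
    then show ?thesis using split insert(1-3) False by (simp add: sum_distrib_left[symmetric])
  qed
qed

lemma neg_one_power_card_Int_mult:
  assumes "finite x"
  shows "(-1::real) ^ card (s \<inter> x) * (-1) ^ card (t \<inter> x) = (-1) ^ card (sym_diff s t \<inter> x)"
proof -
  have "s \<inter> x = (s - t) \<inter> x \<union> s \<inter> t \<inter> x" "t \<inter> x = (t - s) \<inter> x \<union> s \<inter> t \<inter> x"
       "sym_diff s t \<inter> x = (s - t) \<inter> x \<union> (t - s) \<inter> x"
    by blast+
  then have "card (s \<inter> x) + card (t \<inter> x) = card (sym_diff s t \<inter> x) + 2 * card (s \<inter> t \<inter> x)"
    using assms by (simp add: card_Un_disjoint disjoint_iff)
  then have "(-1::real) ^ (card (s \<inter> x) + card (t \<inter> x)) = (-1) ^ card (sym_diff s t \<inter> x)"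
    by (simp add: power_add power_mult)
  then show ?thesis by (simp add: power_add)
qed

lemma walsh_scale_sq: "2 powr (- real d / 2) * 2 powr (- real d / 2) = 1 / 2 ^ d"
proof -
  have "2 powr (- real d / 2) * 2 powr (- real d / 2) = 2 powr (- real d)"
    by (simp add: powr_add[symmetric])
  also have "\<dots> = 1 / 2 ^ d"
    by (simp add: powr_minus divide_inverse powr_realpow)
  finally show ?thesis .
qed

lemma walsh_scale_eq: "2 powr (- real d / 2) = ((2::real) ^ d) powr (-1/2)"
  by (simp add: powr_realpow[symmetric] powr_powr)

lemma abs_walsh: "\<bar>walsh d s x\<bar> = 2 powr (- real d / 2)"
  unfolding walsh_def by (simp add: abs_mult)

lemma walsh_sq: "(walsh d s x)\<^sup>2 = 1 / 2 ^ d"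
  using walsh_scale_sq[of d] unfolding walsh_def power2_eq_square by (simp add: algebra_simps)

lemma walsh_mult:
  assumes "finite x"
  shows "walsh d s x * walsh d t x = (-1) ^ card (sym_diff s t \<inter> x) / 2 ^ d"
proof -
  have "walsh d s x * walsh d t x = (2 powr (- real d / 2) * 2 powr (- real d / 2)) *
      ((-1) ^ card (s \<inter> x) * (-1) ^ card (t \<inter> x))"
    unfolding walsh_def by (simp add: algebra_simps)
  then show ?thesis
    using walsh_scale_sq[of d] by (simp add: neg_one_power_card_Int_mult[OF assms])
qed

lemma walsh_orthonormal:
  assumes "s \<subseteq> {..<d}" "t \<subseteq> {..<d}"
  shows "(\<Sum>x\<in>cube d. walsh d s x * walsh d t x) = (if s = t then 1 else 0)"
proof -
  have "(\<Sum>x\<in>cube d. walsh d s x * walsh d t x) =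
      (\<Sum>x\<in>Pow {..<d}. (-1::real) ^ card (sym_diff s t \<inter> x)) / 2 ^ d"
    unfolding cube_def sum_divide_distrib
    by (intro sum.cong refl walsh_mult) (meson PowD finite_lessThan finite_subset)
  moreover have "sym_diff s t \<inter> {..<d} = {} \<longleftrightarrow> s = t"
    using assms by auto
  ultimately show ?thesis
    by (simp add: sum_Pow_neg_one_power_card_Int)
qed

lemma sum_walsh:
  assumes "s \<subseteq> {..<d}"
  shows "(\<Sum>x\<in>cube d. walsh d s x) = (if s = {} then 2 powr (real d / 2) else 0)"
proof -
  have "(\<Sum>x\<in>cube d. walsh d s x) * 2 powr (- real d / 2) = (if s = {} then 1 else 0)"
    using walsh_orthonormal[OF assms, of "{}"] by (simp add: walsh_def sum_distrib_right)
  moreover have "2 powr (real d / 2) * 2 powr (- real d / 2) = 1"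
    by (simp add: powr_add[symmetric])
  ultimately have "(\<Sum>x\<in>cube d. walsh d s x) * 2 powr (- real d / 2) =
      (if s = {} then 2 powr (real d / 2) else 0) * 2 powr (- real d / 2)"
    by simp
  then show ?thesis
    by simp
qed

lemma theta_diff: "theta d (\<lambda>x. f x - g x) t = theta d f t - theta d g t"
  unfolding theta_def by (simp add: sum_subtractf left_diff_distrib)

lemma walsh_bessel:
  assumes "S \<subseteq> cube d"
  shows "(\<Sum>t\<in>S. (theta d h t)\<^sup>2) \<le> (\<Sum>x\<in>cube d. (h x)\<^sup>2)"
proof -
  define c where "c t = theta d h t" for t
  define v where "v x = (\<Sum>t\<in>S. c t * walsh d t x)" for x
  have finS: "finite S"
    using finite_subset[OF assms] by simp
  have sub: "t \<subseteq> {..<d}" if "t \<in> S" for t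
    using assms that unfolding cube_def by auto
  have "(\<Sum>x\<in>cube d. h x * v x) = (\<Sum>t\<in>S. \<Sum>x\<in>cube d. c t * (h x * walsh d t x))"
    unfolding v_def by (simp add: sum_distrib_left algebra_simps sum.swap[of _ "cube d"])
  also have "\<dots> = (\<Sum>t\<in>S. (c t)\<^sup>2)"
    by (simp add: sum_distrib_left[symmetric] c_def theta_def power2_eq_square)
  finally have inner: "(\<Sum>x\<in>cube d. h x * v x) = (\<Sum>t\<in>S. (c t)\<^sup>2)" .
  have "(\<Sum>x\<in>cube d. (v x)\<^sup>2) = (\<Sum>x\<in>cube d. \<Sum>t\<in>S. \<Sum>u\<in>S. c t * c u * (walsh d t x * walsh d u x))"
    unfolding v_def power2_eq_square sum_product by (simp add: algebra_simps)
  also have "\<dots> = (\<Sum>t\<in>S. \<Sum>u\<in>S. \<Sum>x\<in>cube d. c t * c u * (walsh d t x * walsh d u x))"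
    by (simp add: sum.swap[of _ "cube d"])
  also have "\<dots> = (\<Sum>t\<in>S. \<Sum>u\<in>S. c t * c u * (if t = u then 1 else 0))"
    by (intro sum.cong refl) (simp add: sum_distrib_left[symmetric] walsh_orthonormal sub)
  also have "\<dots> = (\<Sum>t\<in>S. (c t)\<^sup>2)"
    by (simp add: finS if_distrib power2_eq_square cong: if_cong)
  finally have norm: "(\<Sum>x\<in>cube d. (v x)\<^sup>2) = (\<Sum>t\<in>S. (c t)\<^sup>2)" .
  have "0 \<le> (\<Sum>x\<in>cube d. (h x - v x)\<^sup>2)"
    by (simp add: sum_nonneg)
  also have "\<dots> = (\<Sum>x\<in>cube d. (h x)\<^sup>2) - 2 * (\<Sum>x\<in>cube d. h x * v x) + (\<Sum>x\<in>cube d. (v x)\<^sup>2)"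
    by (simp add: power2_diff sum.distrib sum_subtractf sum_distrib_left algebra_simps)
  finally show ?thesis
    using inner norm by (simp add: c_def)
qed

section \<open>Sorted coefficients and perturbed uniform densities\<close>

lemma rev_sorted_list_of_multiset_nth_le:
  fixes A :: "'a::linorder multiset"
  assumes "i < size A" "size (filter_mset (\<lambda>y. v < y) A) \<le> i"
  shows "rev (sorted_list_of_multiset A) ! i \<le> v"
proof (rule ccontr)
  define xs where "xs = rev (sorted_list_of_multiset A)"
  assume "\<not> rev (sorted_list_of_multiset A) ! i \<le> v"
  then have gt: "v < xs ! i"
    unfolding xs_def by simp
  have len: "length xs = size A"
    unfolding xs_def by (metis length_rev mset_sorted_list_of_multiset size_mset)
  have "sorted (rev xs)"
    unfolding xs_def by simp
  then have mono: "xs ! i \<le> xs ! j" if "j \<le> i" for j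
    using that assms(1) len by (simp add: sorted_rev_nth_mono)
  have "\<forall>y\<in>set (take (Suc i) xs). v < y"
    using gt mono by (auto simp: in_set_conv_nth less_Suc_eq_le) (meson less_le_trans)
  then have "Suc i = length (filter (\<lambda>y. v < y) (take (Suc i) xs))"
    using assms(1) len by simp
  also have "\<dots> \<le> length (filter (\<lambda>y. v < y) xs)"
    by (metis append_take_drop_id filter_append le_add1 length_append)
  also have "\<dots> = size (filter_mset (\<lambda>y. v < y) A)"
    unfolding xs_def by (metis mset_filter mset_rev mset_sorted_list_of_multiset size_mset)
  finally show False
    using assms(2) by simp
qed

lemma sorted_coeffs_nth_le:
  assumes "i < 2 ^ d" "card {s\<in>cube d. v < \<bar>theta d g s\<bar>} \<le> i"
  shows "sorted_coeffs d g ! i \<le> v"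
  unfolding sorted_coeffs_def
  using assms by (intro rev_sorted_list_of_multiset_nth_le) (simp_all add: filter_mset_image_mset cube_def card_Pow)

definition perturbed_uniform :: "nat \<Rightarrow> real \<Rightarrow> nat set set \<Rightarrow> nat set \<Rightarrow> real" where
  "perturbed_uniform d a T x = 1 / 2 ^ d + a * (\<Sum>t\<in>T. walsh d t x)"

lemma theta_perturbed_uniform:
  assumes T: "T \<subseteq> cube d - {{}}" and t: "t \<in> cube d"
  shows "theta d (perturbed_uniform d a T) t =
    (if t = {} then 2 powr (- real d / 2) else 0) + (if t \<in> T then a else 0)"
proof -
  have finT: "finite T"
    using finite_subset[OF T(1)] by simp
  have tsub: "t \<subseteq> {..<d}" and Tsub: "\<And>s. s \<in> T \<Longrightarrow> s \<subseteq> {..<d}"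
    using t T unfolding cube_def by auto
  have "theta d (perturbed_uniform d a T) t = (1 / 2 ^ d) * (\<Sum>x\<in>cube d. walsh d t x) +
      a * (\<Sum>s\<in>T. \<Sum>x\<in>cube d. walsh d s x * walsh d t x)"
    unfolding theta_def perturbed_uniform_def
    by (simp add: algebra_simps sum.distrib sum_distrib_left sum_distrib_right sum_divide_distrib
        sum.swap[of _ T])
  also have "(\<Sum>s\<in>T. \<Sum>x\<in>cube d. walsh d s x * walsh d t x) = (if t \<in> T then 1 else 0)"
    using finT by (simp add: walsh_orthonormal Tsub tsub sum.delta' cong: sum.cong)
  also have "(1 / 2 ^ d) * 2 powr (real d / 2) = 2 powr (- real d / 2)"
    using walsh_scale_sq[of d] by (simp add: field_simps powr_minus)
  then have "(1 / 2 ^ d) * (\<Sum>x\<in>cube d. walsh d t x) = (if t = {} then 2 powr (- real d / 2) else 0)"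
    by (simp add: sum_walsh tsub)
  finally show ?thesis
    by simp
qed

lemma sum_perturbed_uniform:
  assumes T: "T \<subseteq> cube d - {{}}"
  shows "(\<Sum>x\<in>cube d. perturbed_uniform d a T x) = 1"
proof -
  have "(\<Sum>x\<in>cube d. walsh d s x) = 0" if "s \<in> T" for s
  proof -
    have "s \<subseteq> {..<d}" "s \<noteq> {}"
      using T that by (auto simp: cube_def)
    then show ?thesis
      by (simp add: sum_walsh)
  qed
  then have "(\<Sum>s\<in>T. \<Sum>x\<in>cube d. walsh d s x) = 0"
    by simp
  then show ?thesis
    unfolding perturbed_uniform_def
    by (simp add: sum.distrib sum_distrib_left[symmetric] sum.swap[of _ T] card_cube)
qed

lemma perturbed_uniform_ge:
  fixes a :: real
  assumes "finite T" "0 \<le> a"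
  shows "perturbed_uniform d a T x \<ge> 1 / 2 ^ d - card T * a * 2 powr (- real d / 2)"
proof -
  have "\<bar>\<Sum>t\<in>T. walsh d t x\<bar> \<le> card T * 2 powr (- real d / 2)"
    using sum_abs[of "\<lambda>t. walsh d t x" T] by (simp add: abs_walsh)
  then have "\<bar>a * (\<Sum>t\<in>T. walsh d t x)\<bar> \<le> a * (card T * 2 powr (- real d / 2))"
    using assms(2) by (simp add: abs_mult mult_left_mono)
  then show ?thesis
    unfolding perturbed_uniform_def by (simp add: algebra_simps abs_le_iff)
qed

lemma card_large_theta_perturbed_uniform:
  assumes T: "T \<subseteq> cube d - {{}}" and a: "0 < a" and v: "0 \<le> v"
  shows "card {s\<in>cube d. v < \<bar>theta d (perturbed_uniform d a T) s\<bar>}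
    \<le> (if v < 2 powr (- real d / 2) then 1 else 0) + (if v < a then card T else 0)"
proof -
  let ?u = "2 powr (- real d / 2) :: real"
  have "{} \<notin> T" "finite T"
    using T finite_subset[OF T] by auto
  then have "{s\<in>cube d. v < \<bar>theta d (perturbed_uniform d a T) s\<bar>}
      \<subseteq> (if v < ?u then {{}} else {}) \<union> (if v < a then T else {})"
    using theta_perturbed_uniform[OF T] a v by (auto split: if_splits)
  then have "card {s\<in>cube d. v < \<bar>theta d (perturbed_uniform d a T) s\<bar>}
      \<le> card ((if v < ?u then {{}} else {}) \<union> (if v < a then T else {}))"
    using \<open>finite T\<close> by (intro card_mono) auto
  also have "\<dots> \<le> card (if v < ?u then {{}::nat set} else {}) + card (if v < a then T else {})"
    by (rule card_Un_le)
  finally show ?thesis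
    by (simp split: if_splits)
qed

lemma perturbed_uniform_in_Fd:
  assumes p: "0 < p" and T: "T \<subseteq> cube d - {{}}" "card T \<le> k" and a: "0 < a"
    and a_le: "a \<le> ((2::real) ^ d) powr (-1/2) * (real k + 1) powr (-1/p)"
  shows "perturbed_uniform d a T \<in> Fd d p"
  unfolding Fd_def
proof (intro CollectI ballI)
  fix m assume m: "m \<in> {1..(2::nat)^d}"
  define u :: real where "u = ((2::real) ^ d) powr (-1/2)"
  define v where "v = u * real m powr (-1/p)"
  have v: "0 \<le> v"
    unfolding v_def u_def by simp
  have u_eq: "2 powr (- real d / 2) = u"
    unfolding u_def by (rule walsh_scale_eq)
  have "card {s\<in>cube d. v < \<bar>theta d (perturbed_uniform d a T) s\<bar>} \<le> m - 1"
  proof (cases "m \<le> k + 1")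
    case True
    have "(real k + 1) powr (-1/p) \<le> real m powr (-1/p)"
      using True m p by (intro powr_mono2') auto
    then have "a \<le> v"
      using a_le unfolding v_def u_def by (smt (verit) mult_left_mono powr_ge_zero)
    moreover have "m = 1 \<Longrightarrow> v = u"
      unfolding v_def by simp
    ultimately have "(if v < u then 1 else 0) + (if v < a then card T else 0) \<le> m - 1"
      using m by (cases "m = 1") auto
    then show ?thesis
      using card_large_theta_perturbed_uniform[OF T(1) a v] unfolding u_eq by linarith
  next
    case False
    then have "(if v < u then 1 else 0) + (if v < a then card T else 0) \<le> m - 1"
      using T(2) by auto
    then show ?thesis
      using card_large_theta_perturbed_uniform[OF T(1) a v] unfolding u_eq by linarith
  qed
  moreover have "m - 1 < 2 ^ d"
    using m by auto
  ultimately have "sorted_coeffs d (perturbed_uniform d a T) ! (m - 1) \<le> v"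
    by (intro sorted_coeffs_nth_le)
  then show "sorted_coeffs d (perturbed_uniform d a T) ! (m - 1) \<le> (2 ^ d) powr (-1/2) * real m powr (-1/p)"
    unfolding v_def u_def .
qed

lemma chi_square_perturbed_uniform_insert:
  assumes T: "T \<subseteq> cube d - {{}}" and s: "s \<in> cube d - {{}}" "s \<notin> T"
    and lower: "\<And>x. x \<in> cube d \<Longrightarrow> 1 / (2 * 2 ^ d) \<le> perturbed_uniform d a T x"
  shows "(\<Sum>x\<in>cube d. (perturbed_uniform d a (insert s T) x)\<^sup>2 / perturbed_uniform d a T x)
    \<le> 1 + 2 * 2 ^ d * a\<^sup>2"
proof -
  let ?f = "perturbed_uniform d a T"
  have "finite T"
    using finite_subset[OF T] by simp
  then have insert: "perturbed_uniform d a (insert s T) x = ?f x + a * walsh d s x" for x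
    unfolding perturbed_uniform_def using s by (simp add: algebra_simps)
  have pos: "0 < ?f x" if "x \<in> cube d" for x
    using lower[OF that] by (smt (verit) divide_pos_pos zero_less_power)
  define q where "q x = (walsh d s x)\<^sup>2 / ?f x" for x
  have "(\<Sum>x\<in>cube d. (perturbed_uniform d a (insert s T) x)\<^sup>2 / ?f x) =
      (\<Sum>x\<in>cube d. ?f x + 2 * a * walsh d s x + a\<^sup>2 * q x)"
  proof (rule sum.cong)
    fix x assume "x \<in> cube d"
    then show "(perturbed_uniform d a (insert s T) x)\<^sup>2 / ?f x =
        ?f x + 2 * a * walsh d s x + a\<^sup>2 * q x"
      using pos[of x] unfolding q_def by (simp add: insert field_simps power2_eq_square)
  qed simp
  also have "\<dots> = 1 + a\<^sup>2 * (\<Sum>x\<in>cube d. q x)"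
    using sum_perturbed_uniform[OF T, of a] sum_walsh[of s d] s
    by (simp add: sum.distrib sum_distrib_left[symmetric] cube_def)
  also have "\<dots> \<le> 1 + a\<^sup>2 * (\<Sum>x\<in>cube d. 2)"
    using lower pos unfolding q_def
    by (intro add_left_mono mult_left_mono sum_mono) (simp_all add: walsh_sq field_simps)
  finally show ?thesis
    by (simp add: card_cube algebra_simps)
qed

section \<open>Chi-square bounds for tests\<close>

lemma event_prob_le_chi_square:
  fixes P Q :: "'x \<Rightarrow> real" and E :: "'x \<Rightarrow> bool" and t :: real
  assumes Q_pos: "\<And>X. X \<in> Xs \<Longrightarrow> 0 < Q X" and sum_Q: "sum Q Xs = 1" and sum_P: "sum P Xs = 1"
    and t: "0 < t"
  shows "(\<Sum>X\<in>Xs. P X * of_bool (E X))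
    \<le> (1 + t/2) * (\<Sum>X\<in>Xs. Q X * of_bool (E X)) + ((\<Sum>X\<in>Xs. (P X)\<^sup>2 / Q X) - 1) / (2 * t)"
proof -
  have pointwise: "P X * of_bool (E X) \<le> (1 + t/2) * (Q X * of_bool (E X)) + (P X - Q X)\<^sup>2 / (2 * t * Q X)"
    if "X \<in> Xs" for X
  proof -
    have "(1 + t/2) * Q X + (P X - Q X)\<^sup>2 / (2 * t * Q X) - P X = (P X - Q X - t * Q X)\<^sup>2 / (2 * t * Q X)"
      using Q_pos[OF that] t by (simp add: field_simps power2_eq_square)
    moreover have "0 \<le> (P X - Q X - t * Q X)\<^sup>2 / (2 * t * Q X)" "0 \<le> (P X - Q X)\<^sup>2 / (2 * t * Q X)"
      using Q_pos[OF that] t by simp_all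
    ultimately show ?thesis
      by (cases "E X") auto
  qed
  have "(\<Sum>X\<in>Xs. (P X - Q X)\<^sup>2 / Q X) = (\<Sum>X\<in>Xs. (P X)\<^sup>2 / Q X - 2 * P X + Q X)"
  proof (rule sum.cong)
    show "(P X - Q X)\<^sup>2 / Q X = (P X)\<^sup>2 / Q X - 2 * P X + Q X" if "X \<in> Xs" for X
      using Q_pos[OF that] by (simp add: field_simps power2_eq_square)
  qed simp
  also have "\<dots> = (\<Sum>X\<in>Xs. (P X)\<^sup>2 / Q X) - 1"
    using sum_P sum_Q by (simp add: sum.distrib sum_subtractf sum_distrib_left[symmetric])
  finally have chi: "(\<Sum>X\<in>Xs. (P X - Q X)\<^sup>2 / Q X) = (\<Sum>X\<in>Xs. (P X)\<^sup>2 / Q X) - 1" .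
  have "(\<Sum>X\<in>Xs. P X * of_bool (E X)) \<le>
      (\<Sum>X\<in>Xs. (1 + t/2) * (Q X * of_bool (E X)) + (P X - Q X)\<^sup>2 / (2 * t * Q X))"
    using pointwise by (rule sum_mono)
  also have "\<dots> = (1 + t/2) * (\<Sum>X\<in>Xs. Q X * of_bool (E X)) + (\<Sum>X\<in>Xs. (P X - Q X)\<^sup>2 / Q X) / (2 * t)"
    by (simp add: sum.distrib sum_distrib_left sum_divide_distrib algebra_simps)
  finally show ?thesis
    unfolding chi .
qed

text \<open>The left-hand side is the sum of the success probabilities of a test \<open>\<psi>\<close> choosing
  among the \<open>B + 1\<close> laws \<open>P 0, \<dots>, P (B - 1)\<close> and \<open>Q\<close> (index \<open>B\<close>).\<close>

lemma sum_test_success_le: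
  fixes Q :: "'x \<Rightarrow> real" and P :: "nat \<Rightarrow> 'x \<Rightarrow> real" and \<psi> :: "'x \<Rightarrow> nat"
  assumes Q_pos: "\<And>X. X \<in> Xs \<Longrightarrow> 0 < Q X" and sum_Q: "sum Q Xs = 1"
    and B: "1 \<le> B" and sum_P: "\<And>j. j < B \<Longrightarrow> sum (P j) Xs = 1"
    and chi_square: "\<And>j. j < B \<Longrightarrow> (\<Sum>X\<in>Xs. (P j X)\<^sup>2 / Q X) \<le> 1 + (real B + 1) / 16"
  shows "(\<Sum>j<B. \<Sum>X\<in>Xs. P j X * of_bool (\<psi> X = j)) + (\<Sum>X\<in>Xs. Q X * of_bool (\<psi> X = B))
           \<le> 3/4 * (real B + 1)"
proof -
  define t :: real where "t = (real B + 1) / 4"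
  have t: "0 < t"
    unfolding t_def by simp
  define D where "D j = (\<Sum>X\<in>Xs. Q X * of_bool (\<psi> X = j))" for j
  have "(\<Sum>X\<in>Xs. P j X * of_bool (\<psi> X = j)) \<le> (1 + t/2) * D j + 1/8" if j: "j < B" for j
  proof -
    have "((\<Sum>X\<in>Xs. (P j X)\<^sup>2 / Q X) - 1) / (2 * t) \<le> 1/8"
      using chi_square[OF j] t unfolding t_def by (simp add: field_simps)
    then show ?thesis
      using event_prob_le_chi_square[OF Q_pos sum_Q sum_P[OF j] t, of "\<lambda>X. \<psi> X = j"]
      unfolding D_def by linarith
  qed
  then have "(\<Sum>j<B. \<Sum>X\<in>Xs. P j X * of_bool (\<psi> X = j)) \<le> (\<Sum>j<B. (1 + t/2) * D j + 1/8)"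
    by (intro sum_mono) simp
  then have P_success: "(\<Sum>j<B. \<Sum>X\<in>Xs. P j X * of_bool (\<psi> X = j)) \<le> (1 + t/2) * (\<Sum>j<B. D j) + B / 8"
    by (simp add: sum.distrib sum_distrib_left)
  have "(\<Sum>j<B. D j) + D B = (\<Sum>j\<le>B. D j)"
    by (simp add: lessThan_Suc_atMost[symmetric])
  also have "\<dots> = (\<Sum>X\<in>Xs. Q X * (\<Sum>j\<le>B. of_bool (\<psi> X = j)))"
    unfolding D_def sum_distrib_left by (rule sum.swap)
  also have "\<dots> \<le> (\<Sum>X\<in>Xs. Q X)"
    using Q_pos by (intro sum_mono mult_right_le_one_le) (auto simp: less_imp_le card_le_Suc0_iff_eq)
  finally have "(1 + t/2) * ((\<Sum>j<B. D j) + D B) \<le> 1 + t/2"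
    using sum_Q t by (simp add: mult_left_le)
  moreover have "0 \<le> D B"
    unfolding D_def using Q_pos by (intro sum_nonneg) (simp add: less_imp_le)
  then have "D B \<le> (1 + t/2) * D B"
    using t by (simp add: algebra_simps)
  ultimately show ?thesis
    using P_success B unfolding D_def t_def by (simp add: field_simps)
qed

text \<open>Decode by the first coordinate reaching \<open>a/2\<close>: a wrong decision means that some
  coordinate is off by at least \<open>a/2\<close>.\<close>

lemma sq_loss_ge_test_error:
  fixes y :: "nat \<Rightarrow> real" and a :: real
  assumes a: "0 < a" and j0: "j0 \<le> B"
  shows "a\<^sup>2/4 * (1 - of_bool ((if \<exists>j<B. a/2 \<le> y j then LEAST j. j < B \<and> a/2 \<le> y j else B) = j0))
         \<le> (\<Sum>j<B. (y j - (if j = j0 then a else 0))\<^sup>2)"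
proof -
  define \<psi> where "\<psi> = (if \<exists>j<B. a/2 \<le> y j then LEAST j. j < B \<and> a/2 \<le> y j else B)"
  have term_le: "(y j - (if j = j0 then a else 0))\<^sup>2 \<le> (\<Sum>j<B. (y j - (if j = j0 then a else 0))\<^sup>2)"
    if "j < B" for j
    using that by (intro member_le_sum) auto
  have "a\<^sup>2/4 \<le> (\<Sum>j<B. (y j - (if j = j0 then a else 0))\<^sup>2)" if wrong: "\<psi> \<noteq> j0"
  proof (cases "\<exists>j<B. a/2 \<le> y j")
    case True
    define l where "l = (LEAST j. j < B \<and> a/2 \<le> y j)"
    have l: "l < B" "a/2 \<le> y l"
      using LeastI_ex[of "\<lambda>j. j < B \<and> a/2 \<le> y j"] True unfolding l_def by auto
    moreover have "l \<noteq> j0"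
      using wrong True unfolding \<psi>_def l_def by simp
    moreover have "(a/2)\<^sup>2 \<le> (y l)\<^sup>2"
      using l a by (intro power_mono) auto
    ultimately show ?thesis
      using term_le[of l] by (simp add: power_divide)
  next
    case False
    then have "\<psi> = B"
      unfolding \<psi>_def by (rule if_not_P)
    then have "j0 < B"
      using wrong j0 by simp
    moreover have "y j0 < a/2"
      using False \<open>j0 < B\<close> by auto
    moreover have "(a/2)\<^sup>2 \<le> (y j0 - a)\<^sup>2"
      using \<open>y j0 < a/2\<close> a by (simp add: power2_commute[of "y j0"] power_mono)
    ultimately show ?thesis
      using term_le[of j0] by (simp add: power_divide)
  qed
  then show ?thesis
    unfolding \<psi>_def[symmetric] by (cases "\<psi> = j0") (simp_all add: sum_nonneg)
qed

lemma sum_PiE_remove_coord: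
  assumes "b \<in> K" "finite K" "finite J"
  shows "(\<Sum>w\<in>PiE K (\<lambda>_. J). G w) = (\<Sum>w\<in>PiE (K - {b}) (\<lambda>_. J). \<Sum>j\<in>J. G (w(b := j)))"
proof -
  have "PiE K (\<lambda>_. J) = (\<lambda>(j, w). w(b := j)) ` (J \<times> PiE (K - {b}) (\<lambda>_. J))"
    using PiE_insert_eq[of b "K - {b}" "\<lambda>_. J"] assms(1) by (simp add: insert_absorb)
  then have "(\<Sum>w\<in>PiE K (\<lambda>_. J). G w) = (\<Sum>(j, w)\<in>J \<times> PiE (K - {b}) (\<lambda>_. J). G (w(b := j)))"
    using inj_combinator[of b "K - {b}" "\<lambda>_. J"] by (simp add: sum.reindex case_prod_unfold)
  then show ?thesis
    by (simp add: sum.cartesian_product[symmetric] sum.swap[of _ J])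
qed

lemma sum_PiE_prod_eq_power:
  fixes h :: "'a \<Rightarrow> real"
  assumes "finite C"
  shows "(\<Sum>X\<in>PiE {..<n} (\<lambda>_. C). \<Prod>i<n. h (X i)) = (\<Sum>x\<in>C. h x) ^ n"
  using prod_sum_PiE[of "{..<n}" "\<lambda>_. C" "\<lambda>i x. h x"] assms by simp

lemma ex_ge_of_card_mult_le_sum:
  fixes f :: "'a \<Rightarrow> real" and c :: real
  assumes "card A * c \<le> sum f A" "finite A" "A \<noteq> {}"
  obtains x where "x \<in> A" "c \<le> f x"
proof -
  have "\<exists>x\<in>A. c \<le> f x"
  proof (rule ccontr)
    assume "\<not> (\<exists>x\<in>A. c \<le> f x)"
    then have "sum f A < (\<Sum>x\<in>A. c)"
      using assms(2,3) by (intro sum_strict_mono) auto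
    then show False
      using assms(1) by simp
  qed
  then show ?thesis
    using that by blast
qed

section \<open>The hypotheses\<close>

locale walsh_hypotheses =
  fixes d k B :: nat and a :: real and g :: "nat \<Rightarrow> nat \<Rightarrow> nat set"
  assumes g_mem: "\<And>b j. b < k \<Longrightarrow> j < B \<Longrightarrow> g b j \<in> cube d - {{}}"
    and g_inj: "inj_on (case_prod g) ({..<k} \<times> {..<B})"
    and a_pos: "0 < a"
    and ka_le: "real k * a \<le> 2 powr (- real d / 2) / 2"
begin

definition hyps :: "(nat \<Rightarrow> nat) set" where
  "hyps = PiE {..<k} (\<lambda>_. {..B})"

definition support :: "(nat \<Rightarrow> nat) \<Rightarrow> nat set set" where
  "support w = (\<lambda>b. g b (w b)) ` {b \<in> {..<k}. w b < B}"

definition dens :: "(nat \<Rightarrow> nat) \<Rightarrow> nat set \<Rightarrow> real" where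
  "dens w = perturbed_uniform d a (support w)"

definition law :: "nat \<Rightarrow> (nat \<Rightarrow> nat) \<Rightarrow> (nat \<Rightarrow> nat set) \<Rightarrow> real" where
  "law n w X = (\<Prod>i<n. dens w (X i))"

definition decode :: "(nat set \<Rightarrow> real) \<Rightarrow> nat \<Rightarrow> nat" where
  "decode h b = (if \<exists>j<B. a/2 \<le> theta d h (g b j) then LEAST j. j < B \<and> a/2 \<le> theta d h (g b j) else B)"

lemma support_subset: "support w \<subseteq> cube d - {{}}"
  unfolding support_def using g_mem by auto

lemma card_support_le: "card (support w) \<le> k"
proof -
  have "card (support w) \<le> card {b \<in> {..<k}. w b < B}"
    unfolding support_def by (rule card_image_le) simp
  also have "\<dots> \<le> card {..<k}"
    by (intro card_mono) auto
  finally show ?thesis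
    by simp
qed

lemma dens_ge: "1 / (2 * 2 ^ d) \<le> dens w x"
proof -
  define u :: real where "u = 2 powr (- real d / 2)"
  have "finite (support w)"
    using finite_subset[OF support_subset] by simp
  then have "1 / 2 ^ d - card (support w) * a * u \<le> dens w x"
    unfolding dens_def u_def using a_pos by (intro perturbed_uniform_ge) auto
  moreover have "card (support w) * a * u \<le> real k * a * u"
    using card_support_le a_pos unfolding u_def by (intro mult_right_mono) auto
  moreover have "real k * a * u \<le> u / 2 * u"
    using ka_le unfolding u_def by (intro mult_right_mono) auto
  moreover have "u / 2 * u = 1 / (2 * 2 ^ d)"
    using walsh_scale_sq[of d] unfolding u_def by simp
  moreover have "1 / 2 ^ d - 1 / (2 * 2 ^ d) = 1 / (2 * (2::real) ^ d)"
    by (simp add: field_simps)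
  ultimately show ?thesis
    by linarith
qed

lemma dens_pos: "0 < dens w x"
  using dens_ge[of w x] by (smt (verit) divide_pos_pos zero_less_power)

lemma sum_dens: "(\<Sum>x\<in>cube d. dens w x) = 1"
  unfolding dens_def by (rule sum_perturbed_uniform[OF support_subset])

lemma dens_in_Fplus1:
  assumes "0 < p" "a \<le> ((2::real) ^ d) powr (-1/2) * (real k + 1) powr (-1/p)"
  shows "dens w \<in> Fplus1 d p"
  unfolding Fplus1_def dens_def
  using perturbed_uniform_in_Fd[OF assms(1) support_subset card_support_le a_pos assms(2)]
    dens_pos sum_dens by (auto simp: dens_def less_imp_le)

lemma mem_support_iff:
  assumes "b < k" "j < B"
  shows "g b j \<in> support w \<longleftrightarrow> w b = j"
  using assms g_inj unfolding support_def inj_on_def by auto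

lemma theta_dens:
  assumes "b < k" "j < B"
  shows "theta d (dens w) (g b j) = (if w b = j then a else 0)"
  using theta_perturbed_uniform[OF support_subset, where t = "g b j" and a = a] g_mem[OF assms]
    mem_support_iff[OF assms] unfolding dens_def by auto

lemma support_upd:
  assumes "b < k" "j < B"
  shows "support (w(b := j)) = insert (g b j) (support (w(b := B)))"
proof -
  have "{b' \<in> {..<k}. (w(b := j)) b' < B} = insert b {b' \<in> {..<k}. (w(b := B)) b' < B}"
    using assms by auto
  then show ?thesis
    unfolding support_def by (auto intro!: image_eqI)
qed

lemma sum_law: "(\<Sum>X\<in>PiE {..<n} (\<lambda>_. cube d). law n w X) = 1"
  unfolding law_def by (simp add: sum_PiE_prod_eq_power sum_dens)

lemma law_pos: "0 < law n w X"
  unfolding law_def by (simp add: prod_pos dens_pos)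

lemma chi_square_law:
  assumes "b < k" "j < B"
  shows "(\<Sum>X\<in>PiE {..<n} (\<lambda>_. cube d). (law n (w(b := j)) X)\<^sup>2 / law n (w(b := B)) X)
    \<le> exp (2 * real n * 2 ^ d * a\<^sup>2)"
proof -
  have "(\<Sum>x\<in>cube d. (dens (w(b := j)) x)\<^sup>2 / dens (w(b := B)) x) \<le> 1 + 2 * 2 ^ d * a\<^sup>2"
    unfolding dens_def support_upd[OF assms]
  proof (rule chi_square_perturbed_uniform_insert[OF support_subset])
    show "g b j \<in> cube d - {{}}" "g b j \<notin> support (w(b := B))"
      using g_mem[OF assms] mem_support_iff[OF assms, of "w(b := B)"] assms by auto
  qed (use dens_ge in \<open>simp add: dens_def\<close>)
  also have "\<dots> \<le> exp (2 * 2 ^ d * a\<^sup>2)"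
    by (rule exp_ge_add_one_self[THEN order.trans[rotated]]) simp
  finally have "(\<Sum>x\<in>cube d. (dens (w(b := j)) x)\<^sup>2 / dens (w(b := B)) x) ^ n \<le> exp (2 * 2 ^ d * a\<^sup>2) ^ n"
    by (intro power_mono) (auto intro!: sum_nonneg simp: dens_pos less_imp_le)
  moreover have "(\<Sum>X\<in>PiE {..<n} (\<lambda>_. cube d). (law n (w(b := j)) X)\<^sup>2 / law n (w(b := B)) X) =
      (\<Sum>X\<in>PiE {..<n} (\<lambda>_. cube d). \<Prod>i<n. (dens (w(b := j)) (X i))\<^sup>2 / dens (w(b := B)) (X i))"
    unfolding law_def by (simp add: prod_power_distrib prod_dividef)
  ultimately show ?thesis
    using sum_PiE_prod_eq_power[where h = "\<lambda>x. (dens (w(b := j)) x)\<^sup>2 / dens (w(b := B)) x"]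
    by (simp add: exp_of_nat_mult[symmetric] algebra_simps)
qed

lemma sq_dist_ge_test_error:
  assumes "w \<in> hyps"
  shows "a\<^sup>2/4 * (\<Sum>b<k. 1 - of_bool (decode h b = w b)) \<le> (\<Sum>x\<in>cube d. (h x - dens w x)\<^sup>2)"
proof -
  let ?e = "theta d (\<lambda>x. h x - dens w x)"
  have block: "a\<^sup>2/4 * (1 - of_bool (decode h b = w b)) \<le> (\<Sum>j<B. (?e (g b j))\<^sup>2)" if "b < k" for b
  proof -
    have "w b \<le> B"
      using assms that unfolding hyps_def by auto
    then have "a\<^sup>2/4 * (1 - of_bool (decode h b = w b))
        \<le> (\<Sum>j<B. (theta d h (g b j) - (if j = w b then a else 0))\<^sup>2)"
      unfolding decode_def by (rule sq_loss_ge_test_error[OF a_pos])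
    also have "\<dots> = (\<Sum>j<B. (?e (g b j))\<^sup>2)"
      using that by (intro sum.cong refl) (auto simp: theta_diff theta_dens)
    finally show ?thesis .
  qed
  have "a\<^sup>2/4 * (\<Sum>b<k. 1 - of_bool (decode h b = w b)) \<le> (\<Sum>b<k. \<Sum>j<B. (?e (g b j))\<^sup>2)"
    unfolding sum_distrib_left using block by (intro sum_mono) simp
  also have "\<dots> = (\<Sum>(b, j)\<in>{..<k} \<times> {..<B}. (?e (g b j))\<^sup>2)"
    by (rule sum.cartesian_product)
  also have "\<dots> = (\<Sum>t\<in>case_prod g ` ({..<k} \<times> {..<B}). (?e t)\<^sup>2)"
    by (subst sum.reindex[OF g_inj]) (auto intro!: sum.cong)
  also have "\<dots> \<le> (\<Sum>x\<in>cube d. (h x - dens w x)\<^sup>2)"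
    using g_mem by (intro walsh_bessel) auto
  finally show ?thesis .
qed

lemma risk_ge_test_error:
  assumes "w \<in> hyps"
  shows "a\<^sup>2/4 * (\<Sum>b<k. 1 - (\<Sum>X\<in>PiE {..<n} (\<lambda>_. cube d). law n w X * of_bool (decode (est X) b = w b)))
    \<le> risk d n est (dens w)"
proof -
  let ?Xs = "PiE {..<n} (\<lambda>_. cube d)"
  let ?I = "\<lambda>X b. of_bool (decode (est X) b = w b) :: real"
  have "(\<Sum>b<k. 1 - (\<Sum>X\<in>?Xs. law n w X * ?I X b)) = (\<Sum>b<k. \<Sum>X\<in>?Xs. law n w X * (1 - ?I X b))"
    using sum_law[of n w] by (simp add: algebra_simps sum_subtractf)
  then have "a\<^sup>2/4 * (\<Sum>b<k. 1 - (\<Sum>X\<in>?Xs. law n w X * ?I X b)) =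
      (\<Sum>X\<in>?Xs. law n w X * (a\<^sup>2/4 * (\<Sum>b<k. 1 - ?I X b)))"
    by (simp add: sum_distrib_left sum.swap[of _ "{..<k}"] algebra_simps)
  also have "\<dots> \<le> (\<Sum>X\<in>?Xs. law n w X * (\<Sum>x\<in>cube d. (est X x - dens w x)\<^sup>2))"
    using sq_dist_ge_test_error[OF assms] law_pos by (intro sum_mono mult_left_mono) (auto simp: less_imp_le)
  also have "\<dots> = risk d n est (dens w)"
    unfolding risk_def law_def ..
  finally show ?thesis .
qed

lemma sum_hyps_test_success_le:
  fixes \<psi> :: "(nat \<Rightarrow> nat set) \<Rightarrow> nat"
  assumes b: "b < k" and B: "1 \<le> B"
    and small: "exp (2 * real n * 2 ^ d * a\<^sup>2) \<le> 1 + (real B + 1) / 16"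
  shows "(\<Sum>w\<in>hyps. \<Sum>X\<in>PiE {..<n} (\<lambda>_. cube d). law n w X * of_bool (\<psi> X = w b)) \<le> 3/4 * card hyps"
proof -
  let ?Xs = "PiE {..<n} (\<lambda>_. cube d)"
  let ?rest = "PiE ({..<k} - {b}) (\<lambda>_. {..B})"
  have split: "(\<Sum>w\<in>hyps. G w) = (\<Sum>w\<in>?rest. \<Sum>j\<le>B. G (w(b := j)))" for G :: "(nat \<Rightarrow> nat) \<Rightarrow> real"
    unfolding hyps_def using b by (intro sum_PiE_remove_coord) auto
  have "(\<Sum>j\<le>B. \<Sum>X\<in>?Xs. law n (w(b := j)) X * of_bool (\<psi> X = j)) \<le> 3/4 * (real B + 1)" for w
  proof -
    have "(\<Sum>X\<in>?Xs. (law n (w(b := j)) X)\<^sup>2 / law n (w(b := B)) X) \<le> 1 + (real B + 1) / 16"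
      if "j < B" for j
      using chi_square_law[OF b that] small by (rule order_trans)
    then have "(\<Sum>j<B. \<Sum>X\<in>?Xs. law n (w(b := j)) X * of_bool (\<psi> X = j))
        + (\<Sum>X\<in>?Xs. law n (w(b := B)) X * of_bool (\<psi> X = B)) \<le> 3/4 * (real B + 1)"
      by (intro sum_test_success_le law_pos sum_law B) (simp_all add: finite_PiE)
    then show ?thesis
      by (simp add: lessThan_Suc_atMost[symmetric])
  qed
  then have "(\<Sum>w\<in>hyps. \<Sum>X\<in>?Xs. law n w X * of_bool (\<psi> X = w b)) \<le> (\<Sum>w\<in>?rest. 3/4 * (real B + 1))"
    unfolding split by (intro sum_mono) simp
  also have "\<dots> = 3/4 * card hyps"
    using split[of "\<lambda>_. 1"] by simp
  finally show ?thesis .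
qed

lemma minimax_risk_ge:
  assumes p: "0 < p" and a_le: "a \<le> ((2::real) ^ d) powr (-1/2) * (real k + 1) powr (-1/p)"
    and B: "1 \<le> B" and small: "exp (2 * real n * 2 ^ d * a\<^sup>2) \<le> 1 + (real B + 1) / 16"
  shows "ereal (real k * a\<^sup>2 / 16) \<le> minimax_risk d p n"
  unfolding minimax_risk_def
proof (rule INF_greatest)
  fix est :: "(nat \<Rightarrow> nat set) \<Rightarrow> nat set \<Rightarrow> real"
  define success where
    "success w b = (\<Sum>X\<in>PiE {..<n} (\<lambda>_. cube d). law n w X * of_bool (decode (est X) b = w b))" for w b
  have "card hyps * (real k * a\<^sup>2 / 16) = a\<^sup>2/4 * (\<Sum>b<k. card hyps / 4)"
    by simp
  also have "\<dots> \<le> a\<^sup>2/4 * (\<Sum>b<k. card hyps - (\<Sum>w\<in>hyps. success w b))"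
    using sum_hyps_test_success_le[OF _ B small] unfolding success_def
    by (intro mult_left_mono sum_mono) fastforce+
  also have "\<dots> = (\<Sum>w\<in>hyps. a\<^sup>2/4 * (\<Sum>b<k. 1 - success w b))"
    unfolding sum_distrib_left[symmetric] by (subst sum.swap) (simp add: sum_subtractf)
  also have "\<dots> \<le> (\<Sum>w\<in>hyps. risk d n est (dens w))"
    unfolding success_def by (intro sum_mono risk_ge_test_error)
  finally have "card hyps * (real k * a\<^sup>2 / 16) \<le> (\<Sum>w\<in>hyps. risk d n est (dens w))" .
  moreover have "finite hyps" "hyps \<noteq> {}"
    unfolding hyps_def by (simp_all add: finite_PiE PiE_eq_empty_iff)
  ultimately obtain w where "w \<in> hyps" "real k * a\<^sup>2 / 16 \<le> risk d n est (dens w)"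
    by (rule ex_ge_of_card_mult_le_sum)
  then show "ereal (real k * a\<^sup>2 / 16) \<le> (SUP f\<in>Fplus1 d p. ereal (risk d n est f))"
    using dens_in_Fplus1[OF p a_le] by (intro SUP_upper2) auto
qed

end

section \<open>Choice of parameters\<close>

lemma power2_powr_minus:
  fixes x r :: real
  assumes "0 < x"
  shows "(x powr (- r))\<^sup>2 = 1 / x powr (2 * r)"
proof -
  have "(x powr (- r))\<^sup>2 = x powr (- (2 * r))"
    unfolding power2_eq_square powr_add[symmetric] by simp
  then show ?thesis
    by (simp add: powr_minus_divide)
qed

lemma minimax_risk_ge_of_packing:
  fixes d k B n :: nat and p q :: real
  assumes p: "0 < p" and B: "1 \<le> B" and kB: "k * B \<le> 2 ^ d - 1" and q: "0 < q"
    and separated: "(real k)\<^sup>2 * q \<le> 1 / (4 * 2 ^ d)"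
    and sparse: "q * (real k + 1) powr (2 / p) \<le> 1 / 2 ^ d"
    and close: "exp (2 * real n * 2 ^ d * q) \<le> 1 + (real B + 1) / 16"
  shows "ereal (real k * q / 16) \<le> minimax_risk d p n"
proof -
  have "card ({..<k} \<times> {..<B}) \<le> card (cube d - {{}})"
    using kB by (simp add: card_Diff_singleton cube_def card_Pow)
  then obtain g0 where g0: "g0 ` ({..<k} \<times> {..<B}) \<subseteq> cube d - {{}}" "inj_on g0 ({..<k} \<times> {..<B})"
    using card_le_inj by (metis finite_Diff finite_SigmaI finite_cube finite_lessThan)
  define a where "a = sqrt q"
  have a: "0 < a" "a\<^sup>2 = q"
    unfolding a_def using q by simp_all
  have "(real k * a)\<^sup>2 \<le> (2 powr (- real d / 2) / 2)\<^sup>2"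
    using separated walsh_scale_sq[of d] a(2)
    by (simp add: power_mult_distrib power_divide power2_eq_square[of "2 powr _"])
  then have "real k * a \<le> 2 powr (- real d / 2) / 2"
    by (rule power2_le_imp_le) simp
  then interpret walsh_hypotheses d k B a "\<lambda>b j. g0 (b, j)"
    using g0 a(1) by unfold_locales (auto simp: case_prod_eta)
  have "a\<^sup>2 \<le> (((2::real) ^ d) powr (-1/2) * (real k + 1) powr (-1/p))\<^sup>2"
    using sparse a(2) by (simp add: power_mult_distrib power2_powr_minus field_simps)
  then have "a \<le> ((2::real) ^ d) powr (-1/2) * (real k + 1) powr (-1/p)"
    by (rule power2_le_imp_le) simp
  from minimax_risk_ge[OF p this B] show ?thesis
    using close a(2) by simp
qed

lemma exp_mult_ln_le:
  fixes c \<epsilon> M :: real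
  assumes e: "0 < \<epsilon>" and c: "c \<le> \<epsilon>/1024" and M: "1 \<le> M"
  shows "exp (2 * c * ln M) \<le> 1 + M powr \<epsilon> / 32"
proof -
  define w where "w = \<epsilon> * ln M"
  have w: "0 \<le> w"
    unfolding w_def using e M by simp
  have "2 * c * ln M \<le> 2 * (\<epsilon>/1024) * ln M"
    using c M by (intro mult_right_mono) auto
  then have "exp (2 * c * ln M) \<le> exp (w / 512)"
    unfolding w_def by simp
  also have "\<dots> \<le> 1 + exp w / 32"
  proof (cases "w \<le> 8")
    case True
    have "exp (w / 512) \<le> 1 + 2 * (w / 512)"
      using w True by (intro real_exp_bound_lemma) auto
    also have "\<dots> \<le> 1 + exp w / 32"
      using True w exp_ge_add_one_self[of w] by linarith
    finally show ?thesis .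
  next
    case False
    have "ln (32::real) = 5 * ln 2"
      using ln_realpow[of 2 5] by simp
    also have "\<dots> \<le> 5"
      using ln_le_minus_one[of 2] by simp
    finally have "exp (w / 512) \<le> exp (w - ln 32)"
      using False by simp
    also have "\<dots> = exp w / 32"
      by (simp add: exp_diff)
    finally show ?thesis
      by simp
  qed
  also have "exp w = M powr \<epsilon>"
    unfolding w_def using M by (simp add: powr_def)
  finally show ?thesis .
qed

lemma ln_two_power_ge_half:
  assumes "1 \<le> d"
  shows "1/2 \<le> ln ((2::real) ^ d)"
proof -
  have "exp (1/2::real) \<le> 1 + 2 * (1/2)"
    by (rule real_exp_bound_lemma) auto
  then have "1/2 \<le> ln (2::real)"
    by (subst ln_ge_iff) auto
  also have "\<dots> \<le> real d * ln 2"
    using assms by simp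
  finally show ?thesis
    by (simp add: ln_realpow)
qed

lemma exists_nat_between_quarter_half:
  fixes z :: real
  assumes "1 \<le> z"
  obtains k :: nat where "1 \<le> k" "z / 4 \<le> real k" "real k \<le> max 1 (z / 2)"
proof
  let ?k = "max 1 (nat \<lfloor>z / 2\<rfloor>)"
  have k: "real ?k = max 1 (real_of_int \<lfloor>z / 2\<rfloor>)"
    using assms by (simp add: of_nat_max)
  show "1 \<le> ?k"
    by simp
  show "z / 4 \<le> real ?k"
    unfolding k by linarith
  show "real ?k \<le> max 1 (z / 2)"
    unfolding k by linarith
qed

lemma exists_block_length:
  fixes k d :: nat and \<epsilon> :: real
  assumes e: "0 < \<epsilon>" "\<epsilon> < 1" and d: "1 \<le> d" and k: "1 \<le> k" "real k \<le> ((2::real) ^ d) powr (1 - \<epsilon>)"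
  obtains B :: nat where "1 \<le> B" "k * B \<le> 2 ^ d - 1" "((2::real) ^ d) powr \<epsilon> / 2 \<le> real B + 1"
proof
  define M :: real where "M = 2 ^ d"
  have M: "2 \<le> M"
    unfolding M_def using d by (metis power_increasing power_one_right one_le_numeral)
  have M1: "real (2 ^ d - 1 :: nat) = M - 1"
    unfolding M_def by (simp add: of_nat_diff)
  have "M powr (1 - \<epsilon>) < M powr 1"
    using e M by (intro powr_less_mono) auto
  then have "real k < M"
    using k(2) M unfolding M_def[symmetric] by simp
  then have "k < 2 ^ d"
    unfolding M_def by (metis of_nat_less_iff of_nat_numeral of_nat_power)
  define B where "B = (2 ^ d - 1) div k"
  show "1 \<le> B"
    unfolding B_def using \<open>k < 2 ^ d\<close> k(1) by (simp add: div_greater_zero_iff Suc_le_eq)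
  show "k * B \<le> 2 ^ d - 1"
    unfolding B_def by simp
  have "2 ^ d - 1 < k * (B + 1)"
    unfolding B_def using k(1) by (metis div_mult_mod_eq add_mult_distrib2 mod_less_divisor
        mult.commute mult_1_right nat_add_left_cancel_less less_le_trans zero_less_one)
  then have "M - 1 < real k * (real B + 1)"
    unfolding M1[symmetric] by (metis of_nat_add of_nat_less_iff of_nat_mult of_nat_1)
  then have "(M - 1) / real k \<le> real B + 1"
    using k(1) by (simp add: field_simps)
  moreover have "(M / 2) / M powr (1 - \<epsilon>) \<le> (M - 1) / real k"
    using M k unfolding M_def[symmetric] by (intro frac_le) auto
  moreover have "M / M powr (1 - \<epsilon>) = M powr \<epsilon>"
    using M powr_diff[of M 1 "1 - \<epsilon>"] by simp
  ultimately show "((2::real) ^ d) powr \<epsilon> / 2 \<le> real B + 1"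
    unfolding M_def by simp
qed

lemma ratio_powr_le:
  fixes x L M p \<epsilon> :: real
  assumes p: "0 < p" "p \<le> 1" and L: "1/2 \<le> L" "L \<le> x"
    and x: "x \<le> M powr (2 * (1 - \<epsilon>) / p)"
  shows "(x / L) powr (p/2) \<le> 2 * M powr (1 - \<epsilon>)"
proof -
  have "x powr (p/2) \<le> (M powr (2 * (1 - \<epsilon>) / p)) powr (p/2)"
    using x p L by (intro powr_mono2) auto
  also have "\<dots> = M powr (2 * (1 - \<epsilon>) / p * (p/2))"
    by (rule powr_powr)
  also have "2 * (1 - \<epsilon>) / p * (p/2) = 1 - \<epsilon>"
    using p by simp
  finally have "(x / L) powr (p/2) \<le> M powr (1 - \<epsilon>) / L powr (p/2)"
    using L by (simp add: powr_divide divide_right_mono)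
  moreover have "(1/2::real) \<le> L powr (p/2)"
  proof -
    have "(1/2::real) \<le> (1/2) powr (p/2)"
      using p powr_mono'[of "p/2" 1 "1/2"] by simp
    also have "\<dots> \<le> L powr (p/2)"
      using L p by (intro powr_mono2) auto
    finally show ?thesis .
  qed
  then have "M powr (1 - \<epsilon>) / L powr (p/2) \<le> M powr (1 - \<epsilon>) / (1/2)"
    by (intro frac_le) auto
  ultimately show ?thesis
    by simp
qed

lemma minimax_risk_ge_sparse_packing:
  fixes p \<epsilon> c r :: real and d k B n :: nat
  assumes p: "0 < p" "p \<le> 1" and e: "0 < \<epsilon>"
    and c: "0 < c" "c \<le> 1/4" "c \<le> 2 powr (-2/p)" "c \<le> \<epsilon>/1024"
    and r: "1 \<le> r" "real n = r * ln (2 ^ d)"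
    and k: "1 \<le> k" "real k \<le> r powr (p/2)"
    and B: "1 \<le> B" "k * B \<le> 2 ^ d - 1" "((2::real) ^ d) powr \<epsilon> / 2 \<le> real B + 1"
  shows "ereal (real k * (c / (r * 2 ^ d)) / 16) \<le> minimax_risk d p n"
proof (rule minimax_risk_ge_of_packing[OF p(1) B(1,2)])
  define M :: real where "M = 2 ^ d"
  define z where "z = r powr (p/2)"
  have z: "1 \<le> z" "z powr (2/p) = r"
    unfolding z_def using r p by (simp_all add: ge_one_powr_ge_zero powr_powr)
  have "z * z = r powr p"
    unfolding z_def by (simp add: powr_add[symmetric])
  also have "\<dots> \<le> r powr 1"
    using r p by (intro powr_mono) auto
  finally have zz: "z * z \<le> r"
    using r by simp
  define q where "q = c / (r * M)"
  have q: "0 < q"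
    unfolding q_def M_def using c r by simp
  then show "0 < c / (r * 2 ^ d)"
    unfolding q_def M_def .
  have "real k * real k \<le> z * z"
    using k z unfolding z_def[symmetric] by (intro mult_mono) auto
  then have "(real k)\<^sup>2 * q \<le> r * q"
    using zz q by (intro mult_right_mono) (auto simp: power2_eq_square)
  also have "\<dots> \<le> 1 / (4 * M)"
    unfolding q_def using c r by (simp add: M_def field_simps)
  finally show "(real k)\<^sup>2 * (c / (r * 2 ^ d)) \<le> 1 / (4 * 2 ^ d)"
    unfolding q_def M_def .
  have "(real k + 1) powr (2/p) \<le> (2 * z) powr (2/p)"
    using k z p unfolding z_def[symmetric] by (intro powr_mono2) auto
  also have "\<dots> = 2 powr (2/p) * r"
    using z by (simp add: powr_mult)
  finally have "q * (real k + 1) powr (2/p) \<le> q * (2 powr (2/p) * r)"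
    using q by (intro mult_left_mono) auto
  also have "\<dots> = c * 2 powr (2/p) / M"
    unfolding q_def using r by (simp add: M_def field_simps)
  also have "\<dots> \<le> 2 powr (-2/p) * 2 powr (2/p) / M"
    using c unfolding M_def by (intro divide_right_mono mult_right_mono) auto
  finally show "c / (r * 2 ^ d) * (real k + 1) powr (2 / p) \<le> 1 / 2 ^ d"
    unfolding q_def M_def by (simp add: powr_add[symmetric])
  have "2 * real n * 2 ^ d * (c / (r * 2 ^ d)) = 2 * c * ln (2 ^ d)"
    using r by (simp add: field_simps)
  then have "exp (2 * real n * 2 ^ d * (c / (r * 2 ^ d))) \<le> 1 + (2 ^ d) powr \<epsilon> / 32"
    using exp_mult_ln_le[OF e c(4), of "2 ^ d"] by simp
  also have "\<dots> \<le> 1 + (real B + 1) / 16"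
    using B(3) by simp
  finally show "exp (2 * real n * 2 ^ d * (c / (r * 2 ^ d))) \<le> 1 + (real B + 1) / 16" .
qed

lemma minimax_risk_ge_sparse:
  fixes p \<epsilon> :: real and d n :: nat
  assumes p: "0 < p" "p \<le> 1" and e: "0 < \<epsilon>" "\<epsilon> < 1" and d: "1 \<le> d"
    and n_lower: "ln ((2::real) ^ d) \<le> real n"
    and n_upper: "real n \<le> ((2::real) ^ d) powr (2 * (1 - \<epsilon>) / p)"
  shows "ereal (min (1/4) (min (2 powr (-2/p)) (\<epsilon>/1024)) / 64 / 2 ^ d *
      (ln ((2::real) ^ d) / real n) powr (1 - p/2)) \<le> minimax_risk d p n"
proof -
  define c where "c = min (1/4) (min (2 powr (-2/p)) (\<epsilon>/1024))"
  have c: "0 < c" "c \<le> 1/4" "c \<le> 2 powr (-2/p)" "c \<le> \<epsilon>/1024"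
    unfolding c_def using e by auto
  define M :: real where "M = 2 ^ d"
  define L where "L = ln M"
  define r where "r = real n / L"
  define z where "z = r powr (p/2)"
  have L: "1/2 \<le> L" "L \<le> real n"
    unfolding L_def M_def using ln_two_power_ge_half[OF d] n_lower by auto
  then have r: "1 \<le> r" "real n = r * L"
    unfolding r_def by simp_all
  have z: "1 \<le> z"
    unfolding z_def using r(1) p by (simp add: ge_one_powr_ge_zero)
  have z_upper: "z \<le> 2 * M powr (1 - \<epsilon>)"
    unfolding z_def r_def by (rule ratio_powr_le[OF p L n_upper[folded M_def]])
  obtain k :: nat where k: "1 \<le> k" "z / 4 \<le> real k" "real k \<le> max 1 (z / 2)"
    using exists_nat_between_quarter_half[OF z] .
  have "1 \<le> M powr (1 - \<epsilon>)"
    unfolding M_def using e by (intro ge_one_powr_ge_zero) auto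
  then have "real k \<le> M powr (1 - \<epsilon>)"
    using k(3) z_upper by simp
  then obtain B where B: "1 \<le> B" "k * B \<le> 2 ^ d - 1" "M powr \<epsilon> / 2 \<le> real B + 1"
    using exists_block_length[OF e d k(1)] unfolding M_def by blast
  have "real k \<le> r powr (p/2)"
    using k(3) z unfolding z_def by simp
  moreover have "real n = r * ln (2 ^ d)"
    using r(2) unfolding L_def M_def .
  ultimately have "ereal (real k * (c / (r * M)) / 16) \<le> minimax_risk d p n"
    using minimax_risk_ge_sparse_packing[OF p e(1) c r(1) _ k(1) _ B[unfolded M_def]]
    unfolding M_def by blast
  moreover have "c / 64 / M * (L / real n) powr (1 - p/2) \<le> real k * (c / (r * M)) / 16"
  proof -
    have "(L / real n) powr (1 - p/2) = inverse r powr 1 / inverse r powr (p/2)"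
      unfolding r_def by (simp add: powr_diff)
    also have "\<dots> = inverse r / inverse z"
      unfolding z_def using r by (simp add: inverse_powr)
    finally have "c / 64 / M * (L / real n) powr (1 - p/2) = (z / 4) * (c / (r * M)) / 16"
      using r z unfolding M_def by (simp add: field_simps)
    also have "\<dots> \<le> real k * (c / (r * M)) / 16"
      using k r c unfolding M_def by (intro divide_right_mono mult_right_mono) auto
    finally show ?thesis .
  qed
  ultimately show ?thesis
    unfolding c_def M_def L_def by (meson ereal_less_eq(3) order.trans)
qed

lemma minimax_risk_ge_parametric:
  fixes p :: real and d n :: nat
  assumes p: "0 < p" "p \<le> 1" and d: "1 \<le> d" and n: "((2::real) ^ d) powr (2 / p) \<le> real n"
  shows "ereal (1 / 1024 / real n) \<le> minimax_risk d p n"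
proof -
  define M :: real where "M = 2 ^ d"
  have M: "2 \<le> M"
    unfolding M_def using d by (metis power_increasing power_one_right one_le_numeral)
  have "M powr 2 \<le> M powr (2 / p)"
    using p M by (intro powr_mono) (auto simp: field_simps)
  then have nM: "M * M \<le> real n"
    using n M unfolding M_def[symmetric] by (simp add: powr_realpow power2_eq_square[symmetric])
  then have n_pos: "0 < real n"
    using M by (smt (verit) mult_pos_pos)
  define q where "q = 1 / (32 * real n * M)"
  have q: "0 < q"
    unfolding q_def using n_pos M by simp
  have k: "real (2 ^ d - 1 :: nat) = M - 1"
    unfolding M_def by (simp add: of_nat_diff)
  have "ereal (real (2 ^ d - 1) * q / 16) \<le> minimax_risk d p n"
  proof (rule minimax_risk_ge_of_packing[OF p(1) order.refl _ q])
    have "(M - 1)\<^sup>2 * q \<le> M * M * q"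
      using M q by (intro mult_right_mono) (auto simp: power2_eq_square intro: mult_mono)
    also have "\<dots> \<le> 1 / (4 * M)"
      using nM M n_pos unfolding q_def by (simp add: field_simps)
    finally show "(real (2 ^ d - 1))\<^sup>2 * q \<le> 1 / (4 * 2 ^ d)"
      unfolding k M_def .
    have "q * M powr (2 / p) \<le> q * real n"
      using n q unfolding M_def by (intro mult_left_mono) auto
    also have "\<dots> \<le> 1 / M"
      using n_pos M unfolding q_def by (simp add: field_simps)
    finally show "q * (real (2 ^ d - 1) + 1) powr (2 / p) \<le> 1 / 2 ^ d"
      unfolding k M_def by simp
    have "exp (1/16 :: real) \<le> 1 + 2 * (1/16)"
      by (rule real_exp_bound_lemma) auto
    moreover have "2 * real n * 2 ^ d * q = 1/16"
      unfolding q_def M_def using n_pos by simp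
    ultimately show "exp (2 * real n * 2 ^ d * q) \<le> 1 + (real 1 + 1) / 16"
      by (simp only:) simp
  qed simp
  moreover have "1 / 1024 / real n \<le> real (2 ^ d - 1) * q / 16"
    unfolding k q_def using M n_pos by (simp add: field_simps)
  ultimately show ?thesis
    by (meson ereal_less_eq(3) order.trans)
qed

theorem theorem2:
  shows "(\<forall>p::real. 0 < p \<and> p \<le> 1 \<longrightarrow>
          (\<forall>\<epsilon>::real. 0 < \<epsilon> \<and> \<epsilon> < 1 \<longrightarrow>
            (\<exists>C>0. \<forall>d n. d \<ge> 1 \<and> ln ((2::real) ^ d) \<le> real n
                 \<and> real n \<le> ((2::real) ^ d) powr (2 * (1 - \<epsilon>) / p) \<longrightarrow>
               minimax_risk d p n \<ge> ereal (C / 2 ^ d *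
                 (ln ((2::real) ^ d) / real n) powr (2 * (1/p - 1/2) / (2 * (1/p - 1/2) + 1))))))
       \<and> (\<exists>C>0. \<forall>p::real. \<forall>d n. 0 < p \<and> p \<le> 1 \<and> d \<ge> 1
                 \<and> real n \<ge> ((2::real) ^ d) powr (2 / p) \<and> (2::real) ^ d \<ge> 4 \<longrightarrow>
               minimax_risk d p n \<ge> ereal (C / real n))"
proof (intro conjI allI impI, goal_cases)
  case (1 p \<epsilon>)
  then have rate: "2 * (1/p - 1/2) / (2 * (1/p - 1/2) + 1) = 1 - p/2"
    by (simp add: field_simps)
  show ?case
    unfolding rate using 1 minimax_risk_ge_sparse[of p \<epsilon>]
    by (intro exI[of _ "min (1/4) (min (2 powr (-2/p)) (\<epsilon>/1024)) / 64"]) auto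
next
  case 2
  show ?case
    using minimax_risk_ge_parametric by (intro exI[of _ "1/1024"]) auto
qed

end
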